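(* Fix integers $s,t\ge2$ and let $W=\{w_1<w_2<\cdots<w_k\}$ be a subset of $\{s+1,s+2,\ldots,st\}$. Let $\Omega_{s,t}(W)$ be the collection of all sets of integers $I=\{i_1<i_2<\cdots<i_k\}$ satisfying $w_\ell-s+\ell\leq i_\ell\leq w_\ell-1$ for all $\ell\in[k]$. Then \[\vert \Omega_{s,t}(W)\vert\geq \frac{s-k}{s}\binom{s+k-1}{k}.\] *)

theory Defs
  imports Complex_Main
begin

definition nth_elem :: "int set \<Rightarrow> nat \<Rightarrow> int" where
  "nth_elem A l = sorted_list_of_set A ! (l - 1)"

definition Omega :: "nat \<Rightarrow> int set \<Rightarrow> int set set" where
  "Omega s W = {I. finite I \<and> card I = card W \<and>
     (\<forall>l\<in>{1..card W}. nth_elem W l - int s + int l \<le> nth_elem I l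
                        \<and> nth_elem I l \<le> nth_elem W l - 1)}"

end

theory Submission
  imports Defs
begin

text \<open>Call a sorted list \<open>c\<^sub>0 \<le> \<dots> \<le> c\<^sub>k\<^sub>-\<^sub>1\<close> of positive integers with
  \<open>c\<^sub>j \<le> s - k + j\<close> a ballot sequence. Setting \<open>i\<^sub>l = w\<^sub>l - c\<^sub>k\<^sub>-\<^sub>l\<close> maps ballot
  sequences injectively into \<open>\<Omega>\<^sub>s\<^sub>,\<^sub>t(W)\<close>: the \<open>w\<^sub>l\<close> increase strictly while the
  subtracted entries do not increase, and the bounds on \<open>c\<close> are exactly the window
  \<open>w\<^sub>l - s + l \<le> i\<^sub>l \<le> w\<^sub>l - 1\<close>. Splitting by whether \<open>c\<^sub>0 = 1\<close>, the number
  \<open>N(s,k)\<close> of ballot sequences satisfies \<open>N(s,k+1) = N(s,k) + N(s-1,k+1)\<close> for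
  \<open>k + 1 < s\<close>. The bound \<open>(s-k)/s \<cdot> (s+k-1 choose k)\<close> obeys the same recursion and is
  nonpositive when \<open>s \<le> k\<close>, so it is at most \<open>N(s,k)\<close>.\<close>

fun ballot_seqs :: "nat \<Rightarrow> nat \<Rightarrow> nat list set" where
  "ballot_seqs s 0 = {[]}"
| "ballot_seqs s (Suc k) =
     (if s \<le> Suc k then {}
      else Cons 1 ` ballot_seqs s k \<union> map Suc ` ballot_seqs (s - 1) (Suc k))"

declare ballot_seqs.simps(2)[simp del]

lemma ballot_seqs_Suc_empty: "s \<le> Suc k \<Longrightarrow> ballot_seqs s (Suc k) = {}"
  by (simp add: ballot_seqs.simps(2))

lemma ballot_seqs_Suc:
  "Suc k < s \<Longrightarrow>
   ballot_seqs s (Suc k) = Cons 1 ` ballot_seqs s k \<union> map Suc ` ballot_seqs (s - 1) (Suc k)"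
  by (simp add: ballot_seqs.simps(2))

lemma ballot_seqs_wf:
  "c \<in> ballot_seqs s k \<Longrightarrow>
   length c = k \<and> sorted c \<and> (\<forall>j<k. 1 \<le> c ! j \<and> c ! j + k \<le> s + j)"
proof (induction s k arbitrary: c rule: ballot_seqs.induct)
  case (1 s)
  then show ?case by simp
next
  case (2 s k)
  have sk: "Suc k < s"
    using "2.prems" ballot_seqs_Suc_empty by (metis empty_iff not_less)
  then have IH: "d \<in> ballot_seqs s k \<Longrightarrow> length d = k \<and> sorted d \<and> (\<forall>j<k. 1 \<le> d ! j \<and> d ! j + k \<le> s + j)"
    "d \<in> ballot_seqs (s - 1) (Suc k) \<Longrightarrow>
     length d = Suc k \<and> sorted d \<and> (\<forall>j<Suc k. 1 \<le> d ! j \<and> d ! j + Suc k \<le> s - 1 + j)" for d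
    using "2.IH" by auto
  from "2.prems" consider
      (one) d where "d \<in> ballot_seqs s k" "c = 1 # d"
    | (shift) d where "d \<in> ballot_seqs (s - 1) (Suc k)" "c = map Suc d"
    unfolding ballot_seqs_Suc[OF sk] by blast
  then show ?case
  proof cases
    case one
    with IH(1) have d: "length d = k" "sorted d"
      "\<And>j. j < k \<Longrightarrow> 1 \<le> d ! j \<and> d ! j + k \<le> s + j" by auto
    have "\<forall>x\<in>set d. 1 \<le> x"
      using d by (auto simp: in_set_conv_nth)
    moreover have "1 \<le> c ! j \<and> c ! j + Suc k \<le> s + j" if "j < Suc k" for j
      using that one d(3)[of "j - 1"] sk by (cases j) auto
    ultimately show ?thesis
      using one d by simp
  next
    case shift
    with IH(2) have d: "length d = Suc k" "sorted d"
      "\<And>j. j < Suc k \<Longrightarrow> 1 \<le> d ! j \<and> d ! j + Suc k \<le> s - 1 + j" by auto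
    have "1 \<le> c ! j \<and> c ! j + Suc k \<le> s + j" if "j < Suc k" for j
      using d(1) d(3)[OF that] shift sk that by auto
    then show ?thesis
      using shift d by (simp add: sorted_map)
  qed
qed

lemma finite_ballot_seqs: "finite (ballot_seqs s k)"
proof (induction s k rule: ballot_seqs.induct)
  case (2 s k)
  then show ?case
    by (cases "Suc k < s") (simp_all add: ballot_seqs_Suc ballot_seqs_Suc_empty)
qed simp

lemma card_ballot_seqs_Suc:
  assumes "Suc k < s"
  shows "card (ballot_seqs s (Suc k)) = card (ballot_seqs s k) + card (ballot_seqs (s - 1) (Suc k))"
proof -
  have "hd (map Suc d) \<noteq> 1" if "d \<in> ballot_seqs (s - 1) (Suc k)" for d
    using ballot_seqs_wf[OF that] by (cases d) auto
  then have disjoint: "Cons 1 ` ballot_seqs s k \<inter> map Suc ` ballot_seqs (s - 1) (Suc k) = {}"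
    by (fastforce dest: arg_cong[where f = hd])
  have "card (ballot_seqs s (Suc k))
      = card (Cons 1 ` ballot_seqs s k) + card (map Suc ` ballot_seqs (s - 1) (Suc k))"
    using assms disjoint by (simp add: ballot_seqs_Suc card_Un_disjoint finite_ballot_seqs)
  also have "\<dots> = card (ballot_seqs s k) + card (ballot_seqs (s - 1) (Suc k))"
    by (simp add: card_image inj_on_def inj_map_eq_map)
  finally show ?thesis .
qed

definition ballot_estimate :: "nat \<Rightarrow> nat \<Rightarrow> real" where
  "ballot_estimate s k = (real s - real k) / real s * real ((s + k - 1) choose k)"

lemma ballot_estimate_Suc:
  assumes "Suc k < s"
  shows "ballot_estimate s (Suc k) = ballot_estimate s k + ballot_estimate (s - 1) (Suc k)"
proof -
  define m where "m = s + k - 1"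
  define C where "C = real (m choose k)"
  have m: "s + k - 1 = m" "s + Suc k - 1 = Suc m" "s - 1 + Suc k - 1 = m"
    using assms by (auto simp: m_def)
  have "Suc (k + (m - k - 1)) = m" "Suc (m - k - 1) = s - 1"
    using assms by (auto simp: m_def)
  then have "Suc k * (m choose Suc k) = (s - 1) * (m choose k)"
    using Suc_times_binomial_add[of k "m - k - 1"] by metis
  then have "real (Suc k) * real (m choose Suc k) = real (s - 1) * C"
    unfolding C_def by (metis of_nat_mult)
  then have absorb: "real (m choose Suc k) = (real s - 1) * C / (real k + 1)"
    using assms by (simp add: of_nat_diff field_simps)
  have "ballot_estimate s (Suc k) = (real s - real k - 1) / real s * (C + (real s - 1) * C / (real k + 1))"
    unfolding ballot_estimate_def m by (simp add: absorb C_def)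
  also have "\<dots> = (real s - real k) / real s * C
      + (real s - real k - 2) / (real s - 1) * ((real s - 1) * C / (real k + 1))"
    using assms by (simp add: divide_simps) (simp add: algebra_simps)
  also have "\<dots> = ballot_estimate s k + ballot_estimate (s - 1) (Suc k)"
    unfolding ballot_estimate_def m absorb C_def using assms by (simp add: of_nat_diff)
  finally show ?thesis .
qed

lemma ballot_estimate_le_card: "ballot_estimate s k \<le> real (card (ballot_seqs s k))"
proof (induction s k rule: ballot_seqs.induct)
  case (1 s)
  then show ?case by (simp add: ballot_estimate_def)
next
  case (2 s k)
  show ?case
  proof (cases "Suc k < s")
    case False
    then have "ballot_estimate s (Suc k) \<le> 0"
      unfolding ballot_estimate_def by (intro mult_nonpos_nonneg divide_nonpos_nonneg) auto
    then show ?thesis by simp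
  next
    case True
    have "ballot_estimate s (Suc k) = ballot_estimate s k + ballot_estimate (s - 1) (Suc k)"
      using True by (rule ballot_estimate_Suc)
    also have "\<dots> \<le> real (card (ballot_seqs s k)) + real (card (ballot_seqs (s - 1) (Suc k)))"
      using "2.IH" True by (intro add_mono) auto
    also have "\<dots> = real (card (ballot_seqs s (Suc k)))"
      using card_ballot_seqs_Suc[OF True] by simp
    finally show ?thesis .
  qed
qed

definition shifted_list :: "int set \<Rightarrow> nat list \<Rightarrow> int list" where
  "shifted_list W c = map2 (\<lambda>w a. w - int a) (sorted_list_of_set W) (rev c)"

lemma nth_shifted_list:
  assumes "length c = card W" and "j < card W"
  shows "shifted_list W c ! j = nth_elem W (Suc j) - int (c ! (card W - Suc j))"
  using assms by (simp add: shifted_list_def nth_elem_def rev_nth)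

lemma strict_sorted_shifted_list:
  assumes "sorted c" and "length c = card W"
  shows "sorted_wrt (<) (shifted_list W c)"
  unfolding sorted_wrt_iff_nth_less
proof (intro allI impI)
  fix i j assume ij: "i < j" "j < length (shifted_list W c)"
  then have "j < card W" using assms(2) by (simp add: shifted_list_def)
  have "sorted_list_of_set W ! i < sorted_list_of_set W ! j"
    using ij \<open>j < card W\<close> strict_sorted_list_of_set[of W] by (simp add: sorted_wrt_iff_nth_less)
  moreover have "c ! (card W - Suc j) \<le> c ! (card W - Suc i)"
    using assms ij \<open>j < card W\<close> by (simp add: sorted_iff_nth_mono)
  ultimately show "shifted_list W c ! i < shifted_list W c ! j"
    using assms(2) ij \<open>j < card W\<close> by (simp add: nth_shifted_list nth_elem_def)
qed

lemma shifted_list_eqD: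
  assumes "shifted_list W c = shifted_list W d" and "length c = card W" and "length d = card W"
  shows "c = d"
proof -
  have "rev c ! j = rev d ! j" if "j < card W" for j
    using nth_shifted_list[OF assms(2) that] nth_shifted_list[OF assms(3) that] assms that
    by (simp add: rev_nth)
  then have "rev c = rev d"
    using assms(2,3) by (intro nth_equalityI) auto
  then show ?thesis by simp
qed

lemma inj_on_set_shifted_list:
  "inj_on (\<lambda>c. set (shifted_list W c)) {c. sorted c \<and> length c = card W}"
proof (rule inj_onI, clarify)
  fix c d assume "sorted c" "length c = card W" "sorted d" "length d = card W"
    and "set (shifted_list W c) = set (shifted_list W d)"
  then have "shifted_list W c = shifted_list W d"
    using strict_sorted_shifted_list strict_sorted_equal by blast
  then show "c = d"
    using \<open>length c = card W\<close> \<open>length d = card W\<close> by (rule shifted_list_eqD)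
qed

lemma set_shifted_list_in_Omega:
  assumes "c \<in> ballot_seqs s (card W)"
  shows "set (shifted_list W c) \<in> Omega s W"
proof -
  let ?k = "card W"
  have c: "length c = ?k" "sorted c" "\<And>j. j < ?k \<Longrightarrow> 1 \<le> c ! j \<and> c ! j + ?k \<le> s + j"
    using ballot_seqs_wf[OF assms] by auto
  have sl: "sorted_list_of_set (set (shifted_list W c)) = shifted_list W c"
    using strict_sorted_shifted_list[OF c(2,1)]
    by (simp add: sorted_list_of_set.idem_if_sorted_distinct strict_sorted_iff)
  have "card (set (shifted_list W c)) = length (shifted_list W c)"
    by (metis sl length_sorted_list_of_set)
  also have "\<dots> = ?k"
    using c(1) by (simp add: shifted_list_def)
  finally have "card (set (shifted_list W c)) = ?k" .
  moreover have "nth_elem W l - int s + int l \<le> nth_elem (set (shifted_list W c)) l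
      \<and> nth_elem (set (shifted_list W c)) l \<le> nth_elem W l - 1" if l: "l \<in> {1..?k}" for l
  proof -
    have "nth_elem (set (shifted_list W c)) l = nth_elem W l - int (c ! (?k - l))"
      using l c(1) nth_shifted_list[of c W "l - 1"] by (auto simp: nth_elem_def sl)
    moreover have "1 \<le> c ! (?k - l) \<and> c ! (?k - l) + l \<le> s"
      using c(3)[of "?k - l"] l by auto
    ultimately show ?thesis by linarith
  qed
  ultimately show ?thesis
    unfolding Omega_def by simp
qed

lemma finite_Omega: "finite (Omega s W)"
proof (rule finite_subset)
  show "Omega s W \<subseteq> Pow (\<Union>l\<in>{1..card W}. {nth_elem W l - int s .. nth_elem W l})"
  proof safe
    fix I x assume I: "I \<in> Omega s W" and x: "x \<in> I"
    then have "finite I" "card I = card W" by (simp_all add: Omega_def)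
    with x obtain j where j: "j < card W" "x = nth_elem I (Suc j)"
      by (metis diff_Suc_1 in_set_conv_nth length_sorted_list_of_set nth_elem_def
          set_sorted_list_of_set)
    have "Suc j \<in> {1..card W}" using j by simp
    moreover have "x \<in> {nth_elem W (Suc j) - int s .. nth_elem W (Suc j)}"
      using I j \<open>Suc j \<in> {1..card W}\<close> unfolding Omega_def by fastforce
    ultimately show "x \<in> (\<Union>l\<in>{1..card W}. {nth_elem W l - int s .. nth_elem W l})"
      by blast
  qed
qed simp

theorem lemma3:
  fixes s t :: nat and W :: "int set"
  assumes "s \<ge> 2" and "t \<ge> 2"
    and "W \<subseteq> {int s + 1 .. int s * int t}"
  shows "real (card (Omega s W)) \<ge>
           (real s - real (card W)) / real s * real ((s + card W - 1) choose (card W))"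
proof -
  let ?shift = "\<lambda>c. set (shifted_list W c)"
  have inj: "inj_on ?shift (ballot_seqs s (card W))"
    by (rule inj_on_subset[OF inj_on_set_shifted_list]) (auto dest: ballot_seqs_wf)
  have "ballot_estimate s (card W) \<le> real (card (ballot_seqs s (card W)))"
    by (rule ballot_estimate_le_card)
  also have "card (ballot_seqs s (card W)) = card (?shift ` ballot_seqs s (card W))"
    using inj by (simp add: card_image)
  also have "\<dots> \<le> card (Omega s W)"
    using set_shifted_list_in_Omega by (intro card_mono finite_Omega) auto
  finally show ?thesis
    unfolding ballot_estimate_def by simp
qed

end
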